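(* Assume AS.1 and AS.3, let $\omega\in(0,1)$ and consider a realization of the SKOFFAR$p$ algorithm. Let $$k_*=\left\lceil\frac{2L_p\,\epsilon^{-(p+1)/p}}{\vartheta\nu_0\,\omega^{(p+1)/p}}\right\rceil,$$ and let $k_0<N_1(\epsilon)$ be an iteration index such that at least $k_*$ of the iterations with indices $0,\dots,k_0-1$ are $\omega$-true. Then $k_1$ is finite, $k_1\le k_0$, and $\sigma_k\ge 2L_p$ for all $k\ge k_1$.
   Context: Let $f:\mathbb{R}^n\to\mathbb{R}$ and $p\ge1$ an integer; $\|\cdot\|$ is the Euclidean norm for vectors, the spectral norm for matrices and the induced (subordinate) norm for tensors; $T[d]^i$ denotes a symmetric $i$-tensor applied to $i$ copies of $d$. Assumptions: AS.1: $f$ is $p$ times continuously differentiable on $\mathbb{R}^n$. AS.3: there is $L_p\ge 0$ with $\|\nabla^p f(x)-\nabla^p f(y)\|\le L_p\|x-y\|$ for all $x,y$. For $x,s\in\mathbb{R}^n$ let $T_{f,p}(x,s)=f(x)+\sum_{i=1}^p\frac{1}{i!}\nabla^i f(x)[s]^i$. Write $g_k=\nabla f(x_k)$. The SKOFFAR$p$ algorithm: given $x_0\in\mathbb{R}^n$, $\nu_0>0$, $\epsilon\in(0,1]$, $\theta>1$, $\mu_{-1}\ge 0$, $\vartheta\in(0,1)$ and a fixed distribution $\mathcal S$ of $\ell\times n$ random matrices ($\ell<n$), for $k=0,1,2,\dots$: (i) if $k=0$ set $\sigma_0=\nu_0$; otherwise choose $\sigma_k\in[\vartheta\nu_k,\max(\nu_k,\mu_k)]$,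 where $\mu_k=\max\Big[\mu_{k-1},\frac{\|S_{k-1}g_k\|-\|\nabla_{\hat s}\widehat T_{k-1}(\hat s_{k-1})\|}{\kappa_{S,k-1}\|s_{k-1}\|^p}\Big]$ for some number $\kappa_{S,k-1}\ge\|S_{k-1}\|$; (ii) draw $S_k\in\mathbb{R}^{\ell\times n}$ from $\mathcal S$, define for $\hat s\in\mathbb{R}^\ell$ the sketched Taylor model $\widehat T_k(\hat s)=T_{f,p}(x_k,S_k^T\hat s)$ and the sketched model $\widehat m_k(\hat s)=\widehat T_k(\hat s)+\frac{\sigma_k}{(p+1)!}\|S_k^T\hat s\|^{p+1}$, and compute $\hat s_k\in\mathbb{R}^\ell$ with $\widehat m_k(\hat s_k)<\widehat m_k(0)$ and $\|\nabla_{\hat s}\widehat T_k(\hat s_k)\|\le\theta\frac{\sigma_k}{p!}\|S_k^T\hat s_k\|^{p-1}\|S_kS_k^T\hat s_k\|$; set $s_k=S_k^T\hat s_k$; (iii) set $x_{k+1}=x_k+s_k$ and $\nu_{k+1}=\nu_k+\nu_k\|s_k\|^{p+1}$. $N_1(\epsilon)=\min\{k\in\mathbb N:\|g_k\|\le\epsilon\}$ (possibly $+\infty$). Define $k_1=\inf\{k\ge1:\nu_k\ge 2L_p/\vartheta\}$. For $\omega\in(0,1)$, an iteration $k\in\{0,\dots,N_1(\epsilon)-2\}$ is called $\omega$-true if $\|s_k\|^p\ge\omega\epsilon$. *)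

theory Defs
  imports "HOL-Analysis.Analysis" "HOL-Library.Extended_Nat"
begin

text \<open>Iterated (Frechet) derivatives: hderiv f i x [h_i,...,h_1] is the i-th derivative
  tensor of f at x applied to the directions h_1..h_i.\<close>
fun hderiv :: "('a::real_normed_vector \<Rightarrow> real) \<Rightarrow> nat \<Rightarrow> 'a \<Rightarrow> 'a list \<Rightarrow> real" where
  "hderiv f 0 x vs = f x"
| "hderiv f (Suc i) x vs =
     (case vs of [] \<Rightarrow> 0 | h # ws \<Rightarrow> frechet_derivative (\<lambda>y. hderiv f i y ws) (at x) h)"

definition AS1 :: "('a::real_normed_vector \<Rightarrow> real) \<Rightarrow> nat \<Rightarrow> bool" where
  "AS1 f p \<longleftrightarrow>
     (\<forall>i<p. \<forall>ws. length ws = i \<longrightarrow> (\<forall>x. (\<lambda>y. hderiv f i y ws) differentiable (at x)))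
   \<and> (\<forall>ws. length ws = p \<longrightarrow> continuous_on UNIV (\<lambda>y. hderiv f p y ws))"

text \<open>AS.3: the p-th derivative tensor is L-Lipschitz in the induced tensor norm
  (the induced norm of a p-tensor T is the sup of |T[v_1,...,v_p]| over unit vectors).\<close>
definition AS3 :: "('a::real_normed_vector \<Rightarrow> real) \<Rightarrow> nat \<Rightarrow> real \<Rightarrow> bool" where
  "AS3 f p L \<longleftrightarrow> L \<ge> 0 \<and>
     (\<forall>x y vs. length vs = p \<longrightarrow> (\<forall>v\<in>set vs. norm v = 1) \<longrightarrow>
        \<bar>hderiv f p x vs - hderiv f p y vs\<bar> \<le> L * norm (x - y))"

definition grad :: "('a::real_inner \<Rightarrow> real) \<Rightarrow> 'a \<Rightarrow> 'a" where
  "grad \<phi> z = (SOME G. (\<phi> has_derivative (\<lambda>h. inner G h)) (at z))"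

definition taylor :: "('a::real_normed_vector \<Rightarrow> real) \<Rightarrow> nat \<Rightarrow> 'a \<Rightarrow> 'a \<Rightarrow> real" where
  "taylor f p x s = f x + (\<Sum>i=1..p. (1 / fact i) * hderiv f i x (replicate i s))"

definition sk_taylor :: "(real^'n \<Rightarrow> real) \<Rightarrow> nat \<Rightarrow> real^'n \<Rightarrow> real^'n^'l \<Rightarrow> real^'l \<Rightarrow> real" where
  "sk_taylor f p x S sh = taylor f p x (transpose S *v sh)"

definition sk_model :: "(real^'n \<Rightarrow> real) \<Rightarrow> nat \<Rightarrow> real^'n \<Rightarrow> real^'n^'l \<Rightarrow> real \<Rightarrow> real^'l \<Rightarrow> real" where
  "sk_model f p x S \<sigma> sh =
     sk_taylor f p x S sh + \<sigma> / fact (p + 1) * norm (transpose S *v sh) ^ (p + 1)"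

text \<open>A realization of SKOFFARp: iterates x, sketching matrices S, sketched steps sh,
  regularisation parameters sigma, nu, mu (mu 0 is mu_{-1}; mu k is mu_k for k >= 1), kappa.\<close>
definition skoffar_run ::
  "(real^'n \<Rightarrow> real) \<Rightarrow> nat \<Rightarrow> real^'n \<Rightarrow> real \<Rightarrow> real \<Rightarrow> real \<Rightarrow> real \<Rightarrow> real
   \<Rightarrow> (nat \<Rightarrow> real^'n) \<Rightarrow> (nat \<Rightarrow> real^'n^'l) \<Rightarrow> (nat \<Rightarrow> real^'l)
   \<Rightarrow> (nat \<Rightarrow> real) \<Rightarrow> (nat \<Rightarrow> real) \<Rightarrow> (nat \<Rightarrow> real) \<Rightarrow> (nat \<Rightarrow> real) \<Rightarrow> bool" where
  "skoffar_run f p x0 \<nu>0 \<epsilon> \<theta> \<mu>m1 vth x S sh \<sigma> \<nu> \<mu> \<kappa> \<longleftrightarrow>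
     0 < \<nu>0 \<and> 0 < \<epsilon> \<and> \<epsilon> \<le> 1 \<and> 1 < \<theta> \<and> 0 \<le> \<mu>m1 \<and> 0 < vth \<and> vth < 1
   \<and> x 0 = x0 \<and> \<nu> 0 = \<nu>0 \<and> \<sigma> 0 = \<nu>0 \<and> \<mu> 0 = \<mu>m1
   \<and> (\<forall>k. \<kappa> k \<ge> onorm (\<lambda>v. S k *v v))
   \<and> (\<forall>k\<ge>1. \<mu> k = max (\<mu> (k - 1))
          ((norm (S (k - 1) *v grad f (x k))
            - norm (grad (sk_taylor f p (x (k - 1)) (S (k - 1))) (sh (k - 1))))
           / (\<kappa> (k - 1) * norm (transpose (S (k - 1)) *v sh (k - 1)) ^ p)))
   \<and> (\<forall>k\<ge>1. vth * \<nu> k \<le> \<sigma> k \<and> \<sigma> k \<le> max (\<nu> k) (\<mu> k))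
   \<and> (\<forall>k. sk_model f p (x k) (S k) (\<sigma> k) (sh k) < sk_model f p (x k) (S k) (\<sigma> k) 0)
   \<and> (\<forall>k. norm (grad (sk_taylor f p (x k) (S k)) (sh k))
          \<le> \<theta> * (\<sigma> k / fact p) * norm (transpose (S k) *v sh k) ^ (p - 1)
              * norm (S k *v (transpose (S k) *v sh k)))
   \<and> (\<forall>k. x (Suc k) = x k + transpose (S k) *v sh k)
   \<and> (\<forall>k. \<nu> (Suc k) = \<nu> k + \<nu> k * norm (transpose (S k) *v sh k) ^ (p + 1))"

definition N1 :: "(real^'n \<Rightarrow> real) \<Rightarrow> (nat \<Rightarrow> real^'n) \<Rightarrow> real \<Rightarrow> enat" where
  "N1 f x \<epsilon> = (if \<exists>k. norm (grad f (x k)) \<le> \<epsilon>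
                 then enat (LEAST k. norm (grad f (x k)) \<le> \<epsilon>) else \<infinity>)"

definition k1 :: "(nat \<Rightarrow> real) \<Rightarrow> real \<Rightarrow> real \<Rightarrow> enat" where
  "k1 \<nu> L vth = (if \<exists>k\<ge>1. \<nu> k \<ge> 2 * L / vth
                   then enat (LEAST k. k \<ge> 1 \<and> \<nu> k \<ge> 2 * L / vth) else \<infinity>)"

definition omega_true :: "(real^'n \<Rightarrow> real) \<Rightarrow> nat \<Rightarrow> (nat \<Rightarrow> real^'n) \<Rightarrow> (nat \<Rightarrow> real^'n^'l)
    \<Rightarrow> (nat \<Rightarrow> real^'l) \<Rightarrow> real \<Rightarrow> real \<Rightarrow> nat \<Rightarrow> bool" where
  "omega_true f p x S sh \<epsilon> \<omega> k \<longleftrightarrow>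
     enat k + 2 \<le> N1 f x \<epsilon> \<and> norm (transpose (S k) *v sh k) ^ p \<ge> \<omega> * \<epsilon>"

end

theory Submission
  imports Defs
begin

text \<open>The claim is bookkeeping on \<nu>: the update \<nu>(k+1) = \<nu>(k) (1 + \<parallel>s_k\<parallel>^(p+1)) makes
  \<nu> nondecreasing with \<nu>(k) \<ge> \<nu>_0 \<Sum>_{i<k} \<parallel>s_i\<parallel>^(p+1), and each \<omega>-true step contributes
  at least (\<omega>\<epsilon>)^((p+1)/p) to that sum. With k_* such steps before k_0 this forces
  \<nu>(k_0) \<ge> 2 L_p / \<vartheta>, hence \<sigma>_k \<ge> \<vartheta> \<nu>(k) \<ge> 2 L_p from k_1 on.\<close>

lemma multiplicative_growth_ge_sum:
  fixes \<nu> a :: "nat \<Rightarrow> real"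
  assumes "0 \<le> \<nu> 0" and "\<And>k. 0 \<le> a k" and "\<And>k. \<nu> (Suc k) = \<nu> k + \<nu> k * a k"
  shows "\<nu> 0 * (1 + (\<Sum>i<k. a i)) \<le> \<nu> k"
proof (induction k)
  case 0
  show ?case by simp
next
  case (Suc k)
  have "\<nu> 0 * 1 \<le> \<nu> 0 * (1 + (\<Sum>i<k. a i))"
    using assms(1,2) by (intro mult_left_mono) (simp_all add: sum_nonneg)
  then have "\<nu> 0 \<le> \<nu> k"
    using Suc.IH by linarith
  then have "\<nu> 0 * a k \<le> \<nu> k * a k"
    using assms(2) by (rule mult_right_mono)
  then show ?case
    using Suc.IH assms(3)[of k] by (simp add: distrib_left)
qed

lemma multiplicative_growth_incseq:
  fixes \<nu> a :: "nat \<Rightarrow> real"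
  assumes "0 \<le> \<nu> 0" and "\<And>k. 0 \<le> a k" and "\<And>k. \<nu> (Suc k) = \<nu> k + \<nu> k * a k"
  shows "incseq \<nu>"
proof (rule incseq_SucI)
  fix k
  have "0 \<le> \<nu> 0 * (1 + (\<Sum>i<k. a i))"
    using assms(1,2) by (simp add: sum_nonneg)
  then have "0 \<le> \<nu> k"
    using multiplicative_growth_ge_sum[OF assms, of k] by linarith
  then show "\<nu> k \<le> \<nu> (Suc k)"
    using assms(2,3) by simp
qed

lemma power_Suc_ge_powr_of_power_ge:
  fixes n t :: real
  assumes "1 \<le> p" and "0 \<le> n" and "0 < t" and "t \<le> n ^ p"
  shows "t powr ((real p + 1) / real p) \<le> n ^ (p + 1)"
proof -
  have n_pos: "0 < n"
    using assms by (cases "n = 0") (auto simp: zero_power)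
  have "n ^ (p + 1) = n powr real (p + 1)"
    using n_pos by (simp only: powr_realpow)
  also have "\<dots> = n powr (real p * ((real p + 1) / real p))"
    using assms(1) by (simp add: add.commute)
  also have "\<dots> = (n powr real p) powr ((real p + 1) / real p)"
    by (simp only: powr_powr)
  also have "\<dots> = (n ^ p) powr ((real p + 1) / real p)"
    using n_pos by (simp only: powr_realpow)
  finally show ?thesis
    using assms(3,4) by (simp add: powr_mono2)
qed

lemma omega_true_step_ge:
  assumes "1 \<le> p" and "0 < \<omega>" and "0 < \<epsilon>" and "omega_true f p x S sh \<epsilon> \<omega> k"
  shows "(\<omega> * \<epsilon>) powr ((real p + 1) / real p) \<le> norm (transpose (S k) *v sh k) ^ (p + 1)"
  using assms unfolding omega_true_def by (intro power_Suc_ge_powr_of_power_ge) simp_all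

lemma multiplicative_growth_ge_card_mult:
  fixes \<nu> a :: "nat \<Rightarrow> real"
  assumes "0 \<le> \<nu> 0" and "\<And>k. 0 \<le> a k" and "\<And>k. \<nu> (Suc k) = \<nu> k + \<nu> k * a k"
    and "T \<subseteq> {..<k}" and "\<And>i. i \<in> T \<Longrightarrow> c \<le> a i" and "0 \<le> c" and "y \<le> real (card T)"
  shows "\<nu> 0 * y * c \<le> \<nu> k"
proof -
  have "\<nu> 0 * y * c \<le> \<nu> 0 * (real (card T) * c)"
    using assms(1,6,7) by (simp add: mult_left_mono mult_right_mono mult.assoc)
  also have "\<dots> \<le> \<nu> 0 * (\<Sum>i\<in>T. a i)"
    using assms(1,5) sum_bounded_below[of T c a] by (simp add: mult_left_mono)
  also have "\<dots> \<le> \<nu> 0 * (\<Sum>i<k. a i)"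
    using assms(1,2,4) by (intro mult_left_mono sum_mono2) auto
  also have "\<dots> \<le> \<nu> k"
    using multiplicative_growth_ge_sum[OF assms(1-3), of k] assms(1) by (simp add: distrib_left)
  finally show ?thesis .
qed

lemma k1_eq_first_crossing:
  assumes "incseq \<nu>" and "1 \<le> k0" and "2 * L / vth \<le> \<nu> k0"
  obtains m where "k1 \<nu> L vth = enat m" and "1 \<le> m" and "m \<le> k0"
    and "\<And>k. m \<le> k \<Longrightarrow> 2 * L / vth \<le> \<nu> k"
proof
  define m where "m = (LEAST k. 1 \<le> k \<and> 2 * L / vth \<le> \<nu> k)"
  have crossing: "1 \<le> m \<and> 2 * L / vth \<le> \<nu> m"
    unfolding m_def by (rule LeastI[of _ k0]) (use assms(2,3) in simp)
  show "k1 \<nu> L vth = enat m"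
    unfolding k1_def m_def using assms(2,3) by auto
  show "1 \<le> m" using crossing by simp
  show "m \<le> k0"
    unfolding m_def by (rule Least_le) (use assms(2,3) in simp)
  show "2 * L / vth \<le> \<nu> k" if "m \<le> k" for k
    using crossing incseqD[OF assms(1) that] by simp
qed

lemma threshold_times_step_bound:
  fixes \<nu>0 vth \<omega> \<epsilon> L q :: real
  assumes "0 < \<nu>0" and "0 < vth" and "0 < \<omega>" and "0 < \<epsilon>"
  shows "\<nu>0 * (2 * L * \<epsilon> powr (- q) / (vth * \<nu>0 * \<omega> powr q)) * (\<omega> * \<epsilon>) powr q
         = 2 * L / vth"
  using assms by (simp add: powr_mult powr_minus field_simps)

theorem mainTheorem7:
  fixes f :: "real^'n \<Rightarrow> real"
    and x :: "nat \<Rightarrow> real^'n" and S :: "nat \<Rightarrow> real^'n^'l" and sh :: "nat \<Rightarrow> real^'l"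
    and \<sigma> \<nu> \<mu> \<kappa> :: "nat \<Rightarrow> real"
    and p k0 :: nat and x0 :: "real^'n"
    and \<nu>0 \<epsilon> \<theta> \<mu>m1 vth L \<omega> :: real
  assumes "CARD('l) < CARD('n)"
    and "1 \<le> p"
    and "AS1 f p" and "AS3 f p L"
    and "skoffar_run f p x0 \<nu>0 \<epsilon> \<theta> \<mu>m1 vth x S sh \<sigma> \<nu> \<mu> \<kappa>"
    and "0 < \<omega>" and "\<omega> < 1"
    and "enat k0 < N1 f x \<epsilon>"
    and "1 \<le> k0"
    and "nat \<lceil>2 * L * \<epsilon> powr (- (real p + 1) / real p)
               / (vth * \<nu>0 * \<omega> powr ((real p + 1) / real p))\<rceil>
           \<le> card {k. k < k0 \<and> omega_true f p x S sh \<epsilon> \<omega> k}"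
  shows "k1 \<nu> L vth \<noteq> \<infinity> \<and> k1 \<nu> L vth \<le> enat k0
         \<and> (\<forall>k. k1 \<nu> L vth \<le> enat k \<longrightarrow> \<sigma> k \<ge> 2 * L)"
proof -
  note run = assms(5)[unfolded skoffar_run_def]
  have \<nu>0_pos: "0 < \<nu>0" and \<epsilon>_pos: "0 < \<epsilon>" and vth_pos: "0 < vth" and "\<nu> 0 = \<nu>0"
    and \<nu>_update: "\<And>k. \<nu> (Suc k) = \<nu> k + \<nu> k * norm (transpose (S k) *v sh k) ^ (p + 1)"
    and \<sigma>_ge: "\<And>k. 1 \<le> k \<Longrightarrow> vth * \<nu> k \<le> \<sigma> k"
    using run by blast+
  define a where "a i = norm (transpose (S i) *v sh i) ^ (p + 1)" for i
  define q where "q = (real p + 1) / real p"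
  define T where "T = {k. k < k0 \<and> omega_true f p x S sh \<epsilon> \<omega> k}"
  define y where "y = 2 * L * \<epsilon> powr (- q) / (vth * \<nu>0 * \<omega> powr q)"
  have growth: "0 \<le> \<nu> 0" "\<And>k. 0 \<le> a k" "\<And>k. \<nu> (Suc k) = \<nu> k + \<nu> k * a k"
    using \<nu>0_pos \<open>\<nu> 0 = \<nu>0\<close> \<nu>_update by (simp_all add: a_def)
  have true_step: "(\<omega> * \<epsilon>) powr q \<le> a i" if "i \<in> T" for i
    using that omega_true_step_ge assms(2,6) \<epsilon>_pos unfolding T_def a_def q_def by blast
  have "y \<le> real (card T)"
    using assms(10) unfolding y_def T_def q_def minus_divide_left by linarith
  have "2 * L / vth = \<nu> 0 * y * (\<omega> * \<epsilon>) powr q"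
    unfolding y_def \<open>\<nu> 0 = \<nu>0\<close>
    using threshold_times_step_bound \<nu>0_pos vth_pos \<epsilon>_pos assms(6) by simp
  also have "\<dots> \<le> \<nu> k0"
    using multiplicative_growth_ge_card_mult[OF growth, of T k0 "(\<omega> * \<epsilon>) powr q" y]
      true_step \<open>y \<le> real (card T)\<close> by (auto simp: T_def)
  finally obtain m where "k1 \<nu> L vth = enat m" "1 \<le> m" "m \<le> k0"
    and crossed: "\<And>k. m \<le> k \<Longrightarrow> 2 * L / vth \<le> \<nu> k"
    using k1_eq_first_crossing multiplicative_growth_incseq[OF growth] assms(9) by blast
  moreover have "2 * L \<le> \<sigma> k" if "m \<le> k" for k
  proof -
    have "2 * L \<le> vth * \<nu> k"
      using crossed[OF that] vth_pos by (simp add: divide_le_eq mult.commute)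
    then show ?thesis
      using \<sigma>_ge[of k] \<open>1 \<le> m\<close> that by simp
  qed
  ultimately show ?thesis by auto
qed

end
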